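(* Let $P$ be a saturated toric sharp monoid, let $v_1,\dots,v_d$ be the first lattice points on the $d$ extremal rays of the dual cone $C(P)^{\vee}$, let $F(P)$ be the free monoid on $v_1,\dots,v_d$, and let $i:P\rightarrow F(P)$ be the morphism $p\mapsto (v_1(p),\dots,v_d(p))$. Then $i$ is exact. Moreover, for any exact morphism $i':P\rightarrow F$ to a free monoid $F$ of rank $d$, there is a unique monoid morphism $j:F(P)\rightarrow F$ such that $i'=j\circ i$.
   Context: A saturated toric sharp monoid is a finitely generated, integral, saturated monoid $P$ with no nontrivial units and with $P^{gp}$ torsion-free. $C(P)$ denotes the rational polyhedral cone generated by $P$ in $P^{gp}\otimes\mathbb{Q}$, and $C(P)^{\vee}\subset \mathrm{Hom}(P^{gp},\mathbb{Q})$ its dual cone; lattice points of $C(P)^{\vee}$ are elements of $\mathrm{Hom}(P^{gp},\mathbb{Z})$ lying in it. A morphism $f:P\rightarrow Q$ of integral monoids is exact if the square formed by $f$, $f^{gp}:P^{gp}\to Q^{gp}$ and the inclusions $P\to P^{gp}$, $Q\to Q^{gp}$ is cartesian as a diagram of sets, i.e. $P=(f^{gp})^{-1}(Q)$. *)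

theory Defs
  imports "HOL-Analysis.Analysis"
begin

text \<open>A monoid P with P^gp torsion-free of rank n is represented, up to isomorphism,
  as a submonoid of the lattice int^'n which generates int^'n as a group;
  then P^gp = int^'n and Hom(P^gp, Z) = int^'n via the standard pairing.\<close>

definition ipair :: "int^'n::finite \<Rightarrow> int^'n \<Rightarrow> int" where
  "ipair v p = (\<Sum>k\<in>UNIV. v$k * p$k)"

definition qpair :: "rat^'n::finite \<Rightarrow> rat^'n \<Rightarrow> rat" where
  "qpair u x = (\<Sum>k\<in>UNIV. u$k * x$k)"

definition ratv :: "int^'n::finite \<Rightarrow> rat^'n" where
  "ratv p = (\<chi> k. of_int (p$k))"

definition submonoid :: "(int^'n::finite) set \<Rightarrow> bool" where
  "submonoid P \<longleftrightarrow> 0 \<in> P \<and> (\<forall>p\<in>P. \<forall>q\<in>P. p + q \<in> P)"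

definition fin_gen :: "(int^'n::finite) set \<Rightarrow> bool" where
  "fin_gen P \<longleftrightarrow> (\<exists>G. finite G \<and> G \<subseteq> P \<and>
      (\<forall>p\<in>P. \<exists>c :: int^'n \<Rightarrow> nat. p = (\<Sum>g\<in>G. of_nat (c g) *s g)))"

definition gen_lattice :: "(int^'n::finite) set \<Rightarrow> bool" where
  "gen_lattice P \<longleftrightarrow> (\<forall>x. \<exists>p\<in>P. \<exists>q\<in>P. x = p - q)"

definition sharp :: "(int^'n::finite) set \<Rightarrow> bool" where
  "sharp P \<longleftrightarrow> (\<forall>p\<in>P. - p \<in> P \<longrightarrow> p = 0)"

definition saturated :: "(int^'n::finite) set \<Rightarrow> bool" where
  "saturated P \<longleftrightarrow> (\<forall>x. \<forall>m::nat. m > 0 \<and> of_nat m *s x \<in> P \<longrightarrow> x \<in> P)"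

definition sat_toric_sharp :: "(int^'n::finite) set \<Rightarrow> bool" where
  "sat_toric_sharp P \<longleftrightarrow> submonoid P \<and> fin_gen P \<and> gen_lattice P \<and> sharp P \<and> saturated P"

definition cone_of :: "(int^'n::finite) set \<Rightarrow> (rat^'n) set" where
  "cone_of P = {x. \<exists>S a. finite S \<and> S \<subseteq> P \<and> (\<forall>s\<in>S. a s \<ge> (0::rat)) \<and>
                     x = (\<Sum>s\<in>S. a s *s ratv s)}"

definition dual_cone :: "(rat^'n::finite) set \<Rightarrow> (rat^'n) set" where
  "dual_cone C = {u. \<forall>x\<in>C. qpair u x \<ge> 0}"

definition extremal_ray :: "(rat^'n::finite) set \<Rightarrow> (rat^'n) set \<Rightarrow> bool" where
  "extremal_ray C R \<longleftrightarrow> (\<exists>u. u \<noteq> 0 \<and> R = {t *s u | t. t \<ge> 0}) \<and> R \<subseteq> C \<and>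
     (\<forall>a\<in>C. \<forall>b\<in>C. a + b \<in> R \<longrightarrow> a \<in> R \<and> b \<in> R)"

definition first_lattice_point :: "(rat^'n::finite) set \<Rightarrow> int^'n \<Rightarrow> bool" where
  "first_lattice_point R v \<longleftrightarrow> v \<noteq> 0 \<and> ratv v \<in> R \<and>
     (\<forall>w. w \<noteq> 0 \<and> ratv w \<in> R \<longrightarrow> (\<exists>t::rat. t \<ge> 1 \<and> ratv w = t *s ratv v))"

definition ray_generators :: "(int^'n::finite) set \<Rightarrow> (int^'n) set" where
  "ray_generators P = {v. \<exists>R. extremal_ray (dual_cone (cone_of P)) R \<and> first_lattice_point R v}"

text \<open>The free monoid N^d, as functions nat => nat supported in {..<d}.\<close>
definition nvec :: "nat \<Rightarrow> (nat \<Rightarrow> nat) set" where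
  "nvec d = {x. \<forall>k\<ge>d. x k = 0}"

definition mon_hom :: "(int^'n::finite) set \<Rightarrow> nat \<Rightarrow> (int^'n \<Rightarrow> nat \<Rightarrow> nat) \<Rightarrow> bool" where
  "mon_hom P d f \<longleftrightarrow> (\<forall>p\<in>P. f p \<in> nvec d) \<and> f 0 = (\<lambda>k. 0) \<and>
     (\<forall>p\<in>P. \<forall>q\<in>P. f (p + q) = (\<lambda>k. f p k + f q k))"

definition free_hom :: "nat \<Rightarrow> nat \<Rightarrow> ((nat \<Rightarrow> nat) \<Rightarrow> nat \<Rightarrow> nat) \<Rightarrow> bool" where
  "free_hom d e j \<longleftrightarrow> (\<forall>x\<in>nvec d. j x \<in> nvec e) \<and> j (\<lambda>k. 0) = (\<lambda>k. 0) \<and>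
     (\<forall>x\<in>nvec d. \<forall>y\<in>nvec d. j (\<lambda>k. x k + y k) = (\<lambda>k. j x k + j y k))"

text \<open>Exactness: P = (f^gp)^{-1}(N^d). Every element of P^gp is p - q with p,q in P,
  and f^gp(p - q) = f p - f q; this lies in N^d iff f q <= f p componentwise.\<close>
definition exact_hom :: "(int^'n::finite) set \<Rightarrow> (int^'n \<Rightarrow> nat \<Rightarrow> nat) \<Rightarrow> bool" where
  "exact_hom P f \<longleftrightarrow> (\<forall>p\<in>P. \<forall>q\<in>P. (\<forall>k. f q k \<le> f p k) \<longrightarrow> p - q \<in> P)"

end

theory Submission
  imports Defs
begin

text \<open>The dual cone \<open>C(P)\<^sup>\<or>\<close> is pointed, since \<open>P\<close> spans the lattice, so by a Minkowski-type
  argument it is generated by the first lattice points \<open>v\<^sub>l\<close> of its extremal rays. Farkas' lemma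
  then identifies \<open>C(P)\<close> with \<open>{x. \<forall>l. v\<^sub>l(x) \<ge> 0}\<close>, and saturation gives \<open>P = C(P) \<inter> P\<^sup>g\<^sup>p\<close>,
  which is exactly the exactness of \<open>i\<close>.

  For an exact \<open>i' : P \<rightarrow> \<nat>\<^sup>d\<close> the coordinates extend to functionals \<open>U\<^sub>k \<in> C(P)\<^sup>\<or>\<close>. Exactness and Farkas
  show that every extremal ray of \<open>C(P)\<^sup>\<or>\<close> contains a nonzero \<open>U\<^sub>k\<close>; as there are \<open>d\<close> rays and \<open>d\<close>
  coordinates this matches them bijectively, \<open>U\<^sub>k = m\<^sub>k v\<^sub>\<tau>\<^sub>(\<^sub>k\<^sub>)\<close> with \<open>m\<^sub>k \<in> \<nat>\<close>, and
  \<open>j(x)\<^sub>k = m\<^sub>k x\<^sub>\<tau>\<^sub>(\<^sub>k\<^sub>)\<close>. Any other factorisation writes \<open>U\<^sub>k\<close> as a nonnegative combination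
  of the \<open>v\<^sub>l\<close>, which by extremality of the ray through \<open>U\<^sub>k\<close> only involves \<open>v\<^sub>\<tau>\<^sub>(\<^sub>k\<^sub>)\<close>.\<close>

lemma qpair_add_left [simp]: "qpair (a + b) x = qpair a x + qpair b x"
  by (simp add: qpair_def distrib_right sum.distrib)
lemma qpair_add_right [simp]: "qpair u (x + y) = qpair u x + qpair u y"
  by (simp add: qpair_def distrib_left sum.distrib)
lemma qpair_diff_left [simp]: "qpair (a - b) x = qpair a x - qpair b x"
  by (simp add: qpair_def left_diff_distrib sum_subtractf)
lemma qpair_diff_right [simp]: "qpair u (x - y) = qpair u x - qpair u y"
  by (simp add: qpair_def right_diff_distrib sum_subtractf)
lemma qpair_minus_left [simp]: "qpair (- a) x = - qpair a x"
  by (simp add: qpair_def sum_negf)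
lemma qpair_scaleR_left [simp]: "qpair (c *s a) x = c * qpair a x"
  by (simp add: qpair_def sum_distrib_left mult.assoc)
lemma qpair_scaleR_right [simp]: "qpair u (c *s x) = c * qpair u x"
  by (simp add: qpair_def sum_distrib_left algebra_simps)
lemma qpair_zero_left [simp]: "qpair 0 x = 0"
  by (simp add: qpair_def)
lemma qpair_zero_right [simp]: "qpair u 0 = 0"
  by (simp add: qpair_def)
lemma qpair_sum_left: "qpair (\<Sum>i\<in>S. f i) x = (\<Sum>i\<in>S. qpair (f i) x)"
  by (induct S rule: infinite_finite_induct) auto
lemma qpair_sum_right: "qpair u (\<Sum>i\<in>S. f i) = (\<Sum>i\<in>S. qpair u (f i))"
  by (induct S rule: infinite_finite_induct) auto
lemma qpair_commute: "qpair a b = qpair b a"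
  unfolding qpair_def by (simp add: mult.commute)

lemma qpair_self_pos:
  assumes "u \<noteq> 0"
  shows "qpair u u > 0"
proof -
  obtain k where k: "u$k \<noteq> 0" using assms by (auto simp: vec_eq_iff)
  have "0 < (\<Sum>j\<in>UNIV. u$j * u$j)"
    by (rule sum_pos2[where i=k]) (use k in \<open>auto simp: zero_less_mult_iff\<close>)
  then show ?thesis by (simp add: qpair_def)
qed

lemma ipair_add_left [simp]: "ipair (a + b) x = ipair a x + ipair b x"
  by (simp add: ipair_def distrib_right sum.distrib)
lemma ipair_add_right [simp]: "ipair u (x + y) = ipair u x + ipair u y"
  by (simp add: ipair_def distrib_left sum.distrib)
lemma ipair_diff_left [simp]: "ipair (a - b) x = ipair a x - ipair b x"
  by (simp add: ipair_def left_diff_distrib sum_subtractf)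
lemma ipair_diff_right [simp]: "ipair u (x - y) = ipair u x - ipair u y"
  by (simp add: ipair_def right_diff_distrib sum_subtractf)
lemma ipair_scaleR_left [simp]: "ipair (c *s a) x = c * ipair a x"
  by (simp add: ipair_def sum_distrib_left mult.assoc)
lemma ipair_zero_left [simp]: "ipair 0 x = 0"
  by (simp add: ipair_def)
lemma ipair_zero_right [simp]: "ipair u 0 = 0"
  by (simp add: ipair_def)
lemma ipair_sum_left: "ipair (\<Sum>i\<in>S. f i) x = (\<Sum>i\<in>S. ipair (f i) x)"
  by (induct S rule: infinite_finite_induct) auto

lemma ipair_axis: "ipair u (axis j 1) = u$j"
proof -
  have "ipair u (axis j 1) = (\<Sum>k\<in>UNIV. if k = j then u$j else 0)"
    unfolding ipair_def by (rule sum.cong) (auto simp: axis_def)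
  then show ?thesis by simp
qed

lemma ipair_eq_zero_imp_eq_zero: "(\<And>x. ipair u x = 0) \<Longrightarrow> u = 0"
  by (metis ipair_axis vec_eq_iff zero_index)

lemma qpair_ratv_axis: "qpair u (ratv (axis j 1)) = u$j"
  unfolding qpair_def ratv_def by (simp add: axis_def if_distrib cong: if_cong)

lemma qpair_ratv_eq_zero_imp_eq_zero: "(\<And>x. qpair u (ratv x) = 0) \<Longrightarrow> u = 0"
  by (metis qpair_ratv_axis vec_eq_iff zero_index)

lemma ratv_add [simp]: "ratv (a + b) = ratv a + ratv b"
  by (simp add: ratv_def vec_eq_iff)
lemma ratv_diff [simp]: "ratv (a - b) = ratv a - ratv b"
  by (simp add: ratv_def vec_eq_iff)
lemma ratv_zero [simp]: "ratv 0 = 0"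
  by (simp add: ratv_def vec_eq_iff)
lemma ratv_scaleR [simp]: "ratv (c *s a) = of_int c *s ratv a"
  by (simp add: ratv_def vec_eq_iff)
lemma ratv_sum: "ratv (\<Sum>i\<in>S. f i) = (\<Sum>i\<in>S. ratv (f i))"
  by (induct S rule: infinite_finite_induct) auto
lemma ratv_inject [simp]: "ratv a = ratv b \<longleftrightarrow> a = b"
  by (simp add: ratv_def vec_eq_iff)
lemma ratv_eq_zero_iff [simp]: "ratv a = 0 \<longleftrightarrow> a = 0"
  using ratv_inject[of a 0] by simp
lemma qpair_ratv: "qpair (ratv u) (ratv p) = of_int (ipair u p)"
  by (simp add: qpair_def ipair_def ratv_def)

lemma scaleR_right_cancel_rat: "(a::rat) *s x = b *s x \<Longrightarrow> x \<noteq> 0 \<Longrightarrow> a = b"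
  by (auto simp: vec_eq_iff)

lemma ex_int_multiples_Ints:
  assumes "finite S"
  shows "\<exists>N::int. N > 0 \<and> (\<forall>s\<in>S. of_int N * (f s :: rat) \<in> \<int>)"
  using assms
proof (induct S rule: finite_induct)
  case empty
  then show ?case by (intro exI[of _ 1]) simp
next
  case (insert x S)
  then obtain N where N: "N > 0" "\<forall>s\<in>S. of_int N * f s \<in> \<int>" by blast
  obtain a b where ab: "quotient_of (f x) = (a, b)" by (cases "quotient_of (f x)")
  have b: "b > 0" using quotient_of_denom_pos[OF ab] .
  have "of_int (N * b) * f x = of_int (N * a)"
    using b unfolding quotient_of_div[OF ab] by simp
  then have "of_int (N * b) * f x \<in> \<int>" by (metis Ints_of_int)
  moreover have "of_int (N * b) * f s \<in> \<int>" if "s \<in> S" for s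
  proof -
    have "of_int (N * b) * f s = (of_int N * f s) * of_int b" by simp
    then show ?thesis using N(2) that by (metis Ints_mult Ints_of_int)
  qed
  ultimately show ?case using N b by (intro exI[of _ "N * b"]) auto
qed

lemma ex_int_multiple_ratv: "\<exists>N::int. N > 0 \<and> (\<exists>z. ratv z = of_int N *s (y::rat^'n::finite))"
proof -
  obtain N where N: "N > 0" "\<forall>k\<in>UNIV. of_int N * y$k \<in> \<int>"
    using ex_int_multiples_Ints[of UNIV "\<lambda>k. y$k"] by auto
  have "of_int \<lfloor>of_int N * y$k\<rfloor> = of_int N * y$k" for k
    using N(2) frac_eq_0_iff[of "of_int N * y$k"] unfolding frac_def by simp
  then have "ratv (\<chi> k. \<lfloor>of_int N * y$k\<rfloor>) = of_int N *s y"
    by (simp add: ratv_def vec_eq_iff)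
  then show ?thesis using N(1) by blast
qed

definition ray :: "rat^'n::finite \<Rightarrow> (rat^'n) set" where
  "ray u = {t *s u | t. t \<ge> 0}"

lemma ray_scaleR_mem: "t \<ge> 0 \<Longrightarrow> t *s u \<in> ray u"
  unfolding ray_def by blast

lemma ray_self: "u \<in> ray u"
  using ray_scaleR_mem[of 1 u] by simp

lemma ray_eq_ray:
  assumes "u \<noteq> 0" "y \<in> ray u" "y \<noteq> 0"
  shows "ray u = ray y"
proof -
  obtain s where s: "s \<ge> 0" "y = s *s u" using assms(2) by (auto simp: ray_def)
  have "s > 0" using s assms(3) by (cases "s = 0") auto
  show ?thesis
  proof (intro set_eqI iffI)
    fix x assume "x \<in> ray u"
    then obtain t where "t \<ge> 0" "x = t *s u" by (auto simp: ray_def)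
    then have "x = (t / s) *s y" "t / s \<ge> 0"
      using \<open>s > 0\<close> s by (auto simp: vector_smult_assoc)
    then show "x \<in> ray y" unfolding ray_def by blast
  next
    fix x assume "x \<in> ray y"
    then obtain t where "t \<ge> 0" "x = t *s y" by (auto simp: ray_def)
    then have "x = (t * s) *s u" "t * s \<ge> 0"
      using s by (auto simp: vector_smult_assoc)
    then show "x \<in> ray u" unfolding ray_def by blast
  qed
qed

lemma ray_scaleR_pos_mem:
  assumes "c > 0" "c *s y \<in> ray u"
  shows "y \<in> ray u"
proof -
  obtain t where t: "t \<ge> 0" "c *s y = t *s u" using assms(2) by (auto simp: ray_def)
  then have "y = (t / c) *s u"
    using assms(1) by (simp add: vec_eq_iff field_simps)
  then show ?thesis using t assms(1) by (simp add: ray_scaleR_mem)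
qed

lemma ray_inter_eq:
  assumes "u \<noteq> 0" "u' \<noteq> 0" "y \<noteq> 0" "y \<in> ray u" "y \<in> ray u'"
  shows "ray u = ray u'"
  using ray_eq_ray[OF assms(1,4,3)] ray_eq_ray[OF assms(2,5,3)] by simp

lemma extremal_ray_sum_mem:
  assumes R: "extremal_ray C R" and C0: "0 \<in> C" and C_add: "\<And>a b. a \<in> C \<Longrightarrow> b \<in> C \<Longrightarrow> a + b \<in> C"
    and S: "finite S" "k \<in> S" and f: "\<And>s. s \<in> S \<Longrightarrow> f s \<in> C" and sum: "sum f S \<in> R"
  shows "f k \<in> R"
proof -
  have "sum f T \<in> C" if "T \<subseteq> S" for T
    using that f by (induct T rule: infinite_finite_induct) (auto simp: C0 C_add)
  then have "sum f (S - {k}) \<in> C" by blast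
  moreover have "sum f S = f k + sum f (S - {k})"
    using S by (simp add: sum.remove)
  ultimately show ?thesis
    using R sum f S unfolding extremal_ray_def by metis
qed

lemma first_lattice_point_ex:
  assumes "u \<noteq> 0"
  shows "\<exists>v. first_lattice_point (ray u) v"
proof -
  obtain N z where N: "N > (0::int)" "ratv z = of_int N *s u"
    using ex_int_multiple_ratv[of u] by blast
  have "z \<noteq> 0"
  proof
    assume "z = 0"
    then have "of_int N *s u = 0" using N by simp
    then show False using N assms by (auto simp: vec_eq_iff)
  qed
  moreover have "ratv z \<in> ray u"
    using N by (simp add: ray_scaleR_mem)
  ultimately have z: "z \<noteq> 0 \<and> ratv z \<in> ray u" by blast
  obtain k where k: "u$k \<noteq> 0" using assms by (auto simp: vec_eq_iff)
  obtain w where w: "w \<noteq> 0 \<and> ratv w \<in> ray u"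
    and w_min: "\<And>w'. w' \<noteq> 0 \<and> ratv w' \<in> ray u \<Longrightarrow> nat \<bar>w$k\<bar> \<le> nat \<bar>w'$k\<bar>"
    using ex_has_least_nat[of "\<lambda>w. w \<noteq> 0 \<and> ratv w \<in> ray u" z "\<lambda>w. nat \<bar>w$k\<bar>"] z by blast
  obtain t where t: "t \<ge> 0" "ratv w = t *s u" using w by (auto simp: ray_def)
  have "t > 0" using t w by (cases "t = 0") auto
  have "\<exists>s\<ge>1. ratv w' = s *s ratv w" if w': "w' \<noteq> 0" "ratv w' \<in> ray u" for w'
  proof -
    obtain t' where t': "t' \<ge> 0" "ratv w' = t' *s u" using w' by (auto simp: ray_def)
    have "nat \<bar>w$k\<bar> \<le> nat \<bar>w'$k\<bar>" using w_min w' by blast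
    then have "\<bar>w$k\<bar> \<le> \<bar>w'$k\<bar>" by simp
    then have "\<bar>rat_of_int (w$k)\<bar> \<le> \<bar>rat_of_int (w'$k)\<bar>"
      by (metis of_int_abs of_int_le_iff)
    moreover have "rat_of_int (w$k) = t * u$k" "rat_of_int (w'$k) = t' * u$k"
      using arg_cong[OF t(2), of "\<lambda>x. x$k"] arg_cong[OF t'(2), of "\<lambda>x. x$k"]
      by (auto simp: ratv_def)
    ultimately have "t * \<bar>u$k\<bar> \<le> t' * \<bar>u$k\<bar>" using t t' by (simp add: abs_mult)
    then have "t \<le> t'" using k by simp
    moreover have "ratv w' = (t' / t) *s ratv w"
      using t t' \<open>t > 0\<close> by (simp add: vector_smult_assoc)
    ultimately show ?thesis using \<open>t > 0\<close> by (intro exI[of _ "t' / t"]) simp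
  qed
  then show ?thesis
    using w unfolding first_lattice_point_def by blast
qed

lemma first_lattice_point_unique:
  assumes "first_lattice_point R v" "first_lattice_point R w"
  shows "v = w"
proof -
  obtain t where t: "t \<ge> 1" "ratv w = t *s ratv v"
    using assms unfolding first_lattice_point_def by blast
  obtain s where s: "s \<ge> 1" "ratv v = s *s ratv w"
    using assms unfolding first_lattice_point_def by blast
  have "1 *s ratv v = (s * t) *s ratv v"
    using s t by (simp add: vector_smult_assoc)
  then have "s * t = 1"
    using assms(1) scaleR_right_cancel_rat[of 1 "ratv v" "s * t"]
    unfolding first_lattice_point_def by simp
  moreover have "t \<le> s * t"
    using s t by (simp add: mult_le_cancel_right1)
  ultimately have "t = 1"
    using t by simp
  then show ?thesis using t by simp
qed

text \<open>If \<open>w = t v\<close> with \<open>t\<close> not integral, then \<open>w - \<lfloor>t\<rfloor> v\<close> is a lattice point of the ray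
  strictly between 0 and \<open>v\<close>.\<close>
lemma first_lattice_point_multiple:
  assumes v: "first_lattice_point (ray (ratv v)) v" and w: "ratv w \<in> ray (ratv v)"
  shows "\<exists>m::nat. w = int m *s v"
proof (cases "w = 0")
  case True
  then show ?thesis by (intro exI[of _ 0]) simp
next
  case False
  obtain t where t: "t \<ge> 1" "ratv w = t *s ratv v"
    using v False w unfolding first_lattice_point_def by blast
  have v0: "ratv v \<noteq> 0" using v unfolding first_lattice_point_def by simp
  have "t = of_int \<lfloor>t\<rfloor>"
  proof (rule ccontr)
    assume "t \<noteq> of_int \<lfloor>t\<rfloor>"
    then have frac: "0 < t - of_int \<lfloor>t\<rfloor>" "t - of_int \<lfloor>t\<rfloor> < 1"
      using floor_correct[of t] by linarith+
    define w' where "w' = w - \<lfloor>t\<rfloor> *s v"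
    have w': "ratv w' = (t - of_int \<lfloor>t\<rfloor>) *s ratv v"
      unfolding w'_def using t by (simp add: vec_eq_iff algebra_simps)
    have "w' \<noteq> 0"
    proof
      assume "w' = 0"
      then have "(t - of_int \<lfloor>t\<rfloor>) *s ratv v = 0 *s ratv v" using w' by simp
      then show False using scaleR_right_cancel_rat v0 frac by fastforce
    qed
    moreover have "ratv w' \<in> ray (ratv v)"
      using frac by (simp only: w') (rule ray_scaleR_mem, simp)
    ultimately obtain t' where "t' \<ge> 1" "ratv w' = t' *s ratv v"
      using v unfolding first_lattice_point_def by blast
    then show False
      using w' frac v0 scaleR_right_cancel_rat by (metis not_le)
  qed
  then have "w = \<lfloor>t\<rfloor> *s v" "\<lfloor>t\<rfloor> \<ge> 0"
    using t by (simp_all flip: ratv_inject)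
  then show ?thesis by (intro exI[of _ "nat \<lfloor>t\<rfloor>"]) simp
qed

definition gen_cone :: "'i set \<Rightarrow> ('i \<Rightarrow> rat^'n::finite) \<Rightarrow> (rat^'n) set" where
  "gen_cone I f = {x. \<exists>a. (\<forall>i\<in>I. a i \<ge> 0) \<and> x = (\<Sum>i\<in>I. a i *s f i)}"

lemma gen_cone_add:
  assumes "x \<in> gen_cone I f" "y \<in> gen_cone I f"
  shows "x + y \<in> gen_cone I f"
proof -
  obtain a b where "\<forall>i\<in>I. a i \<ge> 0" "x = (\<Sum>i\<in>I. a i *s f i)"
    "\<forall>i\<in>I. b i \<ge> 0" "y = (\<Sum>i\<in>I. b i *s f i)"
    using assms unfolding gen_cone_def by blast
  then show ?thesis
    unfolding gen_cone_def
    by (intro CollectI exI[of _ "\<lambda>i. a i + b i"]) (simp add: sum.distrib vector_sadd_rdistrib)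
qed

lemma gen_cone_scaleR:
  assumes "x \<in> gen_cone I f" "c \<ge> 0"
  shows "c *s x \<in> gen_cone I f"
proof -
  obtain a where "\<forall>i\<in>I. a i \<ge> 0" "x = (\<Sum>i\<in>I. a i *s f i)"
    using assms unfolding gen_cone_def by blast
  then show ?thesis
    unfolding gen_cone_def using assms(2)
    by (intro CollectI exI[of _ "\<lambda>i. c * a i"]) (simp add: sum_cmul[symmetric] vector_smult_assoc)
qed

lemma gen_cone_generator: "i \<in> I \<Longrightarrow> finite I \<Longrightarrow> f i \<in> gen_cone I f"
  unfolding gen_cone_def
proof (intro CollectI exI[of _ "\<lambda>j. if j = i then 1 else 0"] conjI)
  assume "i \<in> I" "finite I"
  have "(\<Sum>j\<in>I. (if j = i then 1 else 0) *s f j) = (\<Sum>j\<in>I. if j = i then f i else 0)"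
    by (rule sum.cong) auto
  then show "f i = (\<Sum>j\<in>I. (if j = i then 1 else 0) *s f j)"
    using \<open>i \<in> I\<close> \<open>finite I\<close> by simp
qed simp

lemma gen_cone_mono:
  assumes "finite J" "I \<subseteq> J"
  shows "gen_cone I f \<subseteq> gen_cone J f"
proof
  fix x assume "x \<in> gen_cone I f"
  then obtain a where a: "\<forall>i\<in>I. a i \<ge> 0" "x = (\<Sum>i\<in>I. a i *s f i)"
    unfolding gen_cone_def by blast
  have "x = (\<Sum>i\<in>J. (if i \<in> I then a i else 0) *s f i)"
    using a(2) assms by (simp add: if_distrib[of "\<lambda>c. c *s _"] sum.inter_restrict[symmetric] Int_absorb1
        cong: if_cong)
  then show "x \<in> gen_cone J f"
    using a(1) unfolding gen_cone_def by (intro CollectI exI[of _ "\<lambda>i. if i \<in> I then a i else 0"]) auto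
qed

text \<open>Lifting back along \<open>f h\<close> a representation found in the hyperplane \<open>u = 0\<close>.\<close>
lemma gen_cone_insert_of_projection:
  assumes I: "finite I" "h \<notin> I" and u: "\<forall>i\<in>I. qpair u (f i) \<ge> 0" "qpair u x < 0"
    and c: "c = qpair u (f h)" "c < 0"
    and proj: "x - (qpair u x / c) *s f h \<in> gen_cone I (\<lambda>i. f i - (qpair u (f i) / c) *s f h)"
  shows "x \<in> gen_cone (insert h I) f"
proof -
  obtain a where a: "\<forall>i\<in>I. a i \<ge> 0"
    "x - (qpair u x / c) *s f h = (\<Sum>i\<in>I. a i *s (f i - (qpair u (f i) / c) *s f h))"
    using proj unfolding gen_cone_def by blast
  define S where "S = (\<Sum>i\<in>I. a i * qpair u (f i))"
  have "S \<ge> 0" unfolding S_def using a u by (auto intro!: sum_nonneg)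
  define \<mu> where "\<mu> = (qpair u x - S) / c"
  have \<mu>: "\<mu> \<ge> 0" unfolding \<mu>_def using \<open>S \<ge> 0\<close> u c by (simp add: divide_nonpos_neg)
  have "(\<Sum>i\<in>I. a i *s (f i - (qpair u (f i) / c) *s f h))
      = (\<Sum>i\<in>I. a i *s f i - ((a i * qpair u (f i)) / c) *s f h)"
    by (rule sum.cong) (auto simp: vec_eq_iff algebra_simps)
  also have "\<dots> = (\<Sum>i\<in>I. a i *s f i) - (S / c) *s f h"
    by (simp add: sum_subtractf S_def vec_eq_iff sum_distrib_right sum_divide_distrib)
  finally have "x = (\<Sum>i\<in>I. a i *s f i) + \<mu> *s f h"
    using a(2) c unfolding \<mu>_def by (simp add: vec_eq_iff field_simps)
  also have "\<dots> = (\<Sum>i\<in>insert h I. (a(h := \<mu>)) i *s f i)"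
    using I by (simp add: add.commute, intro sum.cong) auto
  finally show ?thesis
    using a(1) \<mu> unfolding gen_cone_def by (auto intro!: exI[of _ "a(h := \<mu>)"])
qed

lemma farkas:
  assumes "finite I" "x \<notin> gen_cone I f"
  shows "\<exists>u. (\<forall>i\<in>I. qpair u (f i) \<ge> 0) \<and> qpair u x < 0"
  using assms
proof (induct I arbitrary: f x rule: finite_induct)
  case empty
  then have "x \<noteq> 0" by (auto simp: gen_cone_def)
  then have "qpair (- x) x < 0" using qpair_self_pos[of x] by simp
  then show ?case by blast
next
  case (insert h I)
  then have "x \<notin> gen_cone I f"
    using gen_cone_mono[of "insert h I" I f] by blast
  then obtain u where u: "\<forall>i\<in>I. qpair u (f i) \<ge> 0" "qpair u x < 0"
    using insert(3) by blast
  show ?case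
  proof (cases "qpair u (f h) \<ge> 0")
    case True
    then show ?thesis using u by auto
  next
    case False
    define c where "c = qpair u (f h)"
    have c: "c < 0" using False c_def by simp
    then obtain w where w: "\<forall>i\<in>I. qpair w (f i - (qpair u (f i) / c) *s f h) \<ge> 0"
      "qpair w (x - (qpair u x / c) *s f h) < 0"
      using insert gen_cone_insert_of_projection[OF insert(1,2) u c_def] by blast
    define w' where "w' = w - (qpair w (f h) / c) *s u"
    have "qpair w' (f i) \<ge> 0" if "i \<in> insert h I" for i
    proof (cases "i = h")
      case True
      then show ?thesis using c by (simp add: w'_def c_def)
    next
      case False
      then show ?thesis using w(1) that by (simp add: w'_def field_simps)
    qed
    moreover have "qpair w' x < 0"
      using w(2) by (simp add: w'_def field_simps)
    ultimately show ?thesis by blast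
  qed
qed

lemma submonoid_nat_scaleR_mem:
  assumes "submonoid P" "p \<in> P"
  shows "of_nat m *s p \<in> P"
proof (induct m)
  case 0
  then show ?case using assms(1) by (simp add: submonoid_def)
next
  case (Suc m)
  have "of_nat (Suc m) *s p = p + of_nat m *s p" by (simp add: vector_sadd_rdistrib)
  then show ?case using Suc assms unfolding submonoid_def by simp
qed

lemma submonoid_sum_mem:
  assumes "submonoid P" "finite S" "S \<subseteq> P"
  shows "(\<Sum>s\<in>S. of_nat (c s) *s s) \<in> P"
  using assms(2,3)
proof (induct S rule: finite_induct)
  case empty
  then show ?case using assms(1) by (simp add: submonoid_def)
next
  case (insert s S)
  then show ?case
    using assms(1) submonoid_nat_scaleR_mem[OF assms(1), of s "c s"] by (simp add: submonoid_def)
qed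

lemma saturated_cone_of_lattice_point:
  assumes "submonoid P" "saturated P" and x: "ratv x \<in> cone_of P"
  shows "x \<in> P"
proof -
  obtain S a where S: "finite S" "S \<subseteq> P" "\<forall>s\<in>S. a s \<ge> 0" "ratv x = (\<Sum>s\<in>S. a s *s ratv s)"
    using x unfolding cone_of_def by blast
  obtain N where N: "N > 0" "\<forall>s\<in>S. of_int N * a s \<in> \<int>"
    using ex_int_multiples_Ints[OF S(1)] by blast
  define c where "c s = nat \<lfloor>of_int N * a s\<rfloor>" for s
  have c: "of_nat (c s) = of_int N * a s" if "s \<in> S" for s
  proof -
    have "of_int N * a s \<in> \<int>" using N(2) that by blast
    then obtain n where n: "of_int N * a s = of_int n" by (auto elim: Ints_cases)
    have "n \<ge> 0" using n S(3) that N(1) by (metis of_int_0_le_iff zero_le_mult_iff of_int_pos less_imp_le)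
    then show ?thesis unfolding c_def n by simp
  qed
  have "ratv (N *s x) = (\<Sum>s\<in>S. (of_int N * a s) *s ratv s)"
    using S(4) by (simp add: sum_cmul[symmetric] vector_smult_assoc)
  also have "\<dots> = ratv (\<Sum>s\<in>S. of_nat (c s) *s s)"
    by (simp add: ratv_sum c cong: sum.cong)
  finally have "N *s x = (\<Sum>s\<in>S. of_nat (c s) *s s)"
    by (simp only: ratv_inject)
  then have "of_nat (nat N) *s x \<in> P"
    using submonoid_sum_mem[OF assms(1) S(1,2)] N(1) by simp
  then show ?thesis
    using assms(2) N(1) unfolding saturated_def by (metis zero_less_nat_eq)
qed

lemma additive_eq_ipair:
  fixes \<phi> :: "int^'n::finite \<Rightarrow> int"
  assumes add: "\<And>x y. \<phi> (x + y) = \<phi> x + \<phi> y"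
  shows "\<phi> x = ipair (\<chi> j. \<phi> (axis j 1)) x"
proof -
  have zero: "\<phi> 0 = 0" using add[of 0 0] by simp
  have nat_scaleR: "\<phi> (of_nat m *s y) = of_nat m * \<phi> y" for m y
  proof (induct m)
    case (Suc m)
    have "of_nat (Suc m) *s y = y + of_nat m *s y" by (simp add: vector_sadd_rdistrib)
    then show ?case using Suc add by (simp add: algebra_simps)
  qed (simp add: zero)
  have int_scaleR: "\<phi> (c *s y) = c * \<phi> y" for c y
  proof (cases "c \<ge> 0")
    case True
    then show ?thesis using nat_scaleR[of "nat c" y] by simp
  next
    case False
    have "\<phi> (c *s y) + \<phi> (of_nat (nat (- c)) *s y) = 0"
      using False add[symmetric] zero by (simp add: vector_sadd_rdistrib[symmetric])
    then show ?thesis using nat_scaleR[of "nat (- c)" y] False by simp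
  qed
  have "\<phi> x = \<phi> (\<Sum>j\<in>UNIV. x$j *s axis j 1)" by (simp add: basis_expansion)
  also have "\<dots> = (\<Sum>j\<in>UNIV. x$j * \<phi> (axis j 1))"
  proof -
    have "\<phi> (\<Sum>j\<in>J. x$j *s axis j 1) = (\<Sum>j\<in>J. x$j * \<phi> (axis j 1))" for J :: "'n set"
      by (induct J rule: infinite_finite_induct) (simp_all add: zero add int_scaleR)
    then show ?thesis .
  qed
  finally show ?thesis by (simp add: ipair_def mult.commute)
qed

locale lattice_monoid =
  fixes P :: "(int^'n::finite) set"
  assumes submonoid: "submonoid P" and fin_gen: "fin_gen P" and gen_lattice: "gen_lattice P"
begin

lemma zero_mem: "0 \<in> P" and add_mem: "p \<in> P \<Longrightarrow> q \<in> P \<Longrightarrow> p + q \<in> P"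
  using submonoid unfolding submonoid_def by blast+

lemma ex_diff: obtains p q where "p \<in> P" "q \<in> P" "x = p - q"
  using gen_lattice unfolding gen_lattice_def by blast

definition gens :: "(int^'n) set" where
  "gens = (SOME G. finite G \<and> G \<subseteq> P \<and> (\<forall>p\<in>P. \<exists>c :: int^'n \<Rightarrow> nat. p = (\<Sum>g\<in>G. of_nat (c g) *s g)))"

lemma gens: "finite gens" "gens \<subseteq> P" "p \<in> P \<Longrightarrow> \<exists>c :: int^'n \<Rightarrow> nat. p = (\<Sum>g\<in>gens. of_nat (c g) *s g)"
proof -
  have "\<exists>G. finite G \<and> G \<subseteq> P \<and> (\<forall>p\<in>P. \<exists>c :: int^'n \<Rightarrow> nat. p = (\<Sum>g\<in>G. of_nat (c g) *s g))"
    using fin_gen unfolding fin_gen_def by blast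
  from someI_ex[OF this] show "finite gens" "gens \<subseteq> P"
    "p \<in> P \<Longrightarrow> \<exists>c :: int^'n \<Rightarrow> nat. p = (\<Sum>g\<in>gens. of_nat (c g) *s g)"
    unfolding gens_def by blast+
qed

lemma qpair_eq_sum_gens:
  assumes "p \<in> P"
  obtains c :: "int^'n \<Rightarrow> nat" where "qpair u (ratv p) = (\<Sum>g\<in>gens. of_nat (c g) * qpair u (ratv g))"
proof -
  obtain c :: "int^'n \<Rightarrow> nat" where "p = (\<Sum>g\<in>gens. of_nat (c g) *s g)"
    using gens(3)[OF assms] by blast
  then have "qpair u (ratv p) = (\<Sum>g\<in>gens. of_nat (c g) * qpair u (ratv g))"
    by (simp add: ratv_sum qpair_sum_right)
  then show thesis by (rule that)
qed

lemma qpair_gens_zero_imp_zero: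
  assumes "\<forall>g\<in>gens. qpair u (ratv g) = 0"
  shows "u = 0"
proof -
  have P0: "qpair u (ratv p) = 0" if "p \<in> P" for p
    by (rule qpair_eq_sum_gens[OF that, of u]) (use assms in simp)
  show ?thesis
  proof (rule qpair_ratv_eq_zero_imp_eq_zero)
    fix x
    obtain p q where "p \<in> P" "q \<in> P" "x = p - q" by (rule ex_diff)
    then show "qpair u (ratv x) = 0" using P0 by simp
  qed
qed

lemma ipair_zero_on_P_imp_zero:
  assumes "\<And>p. p \<in> P \<Longrightarrow> ipair w p = 0"
  shows "w = 0"
proof (rule ipair_eq_zero_imp_eq_zero)
  fix x
  obtain p q where "p \<in> P" "q \<in> P" "x = p - q" by (rule ex_diff)
  then show "ipair w x = 0" using assms by simp
qed

lemma additive_extends_linear: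
  fixes f :: "int^'n \<Rightarrow> int"
  assumes add: "\<And>p q. p \<in> P \<Longrightarrow> q \<in> P \<Longrightarrow> f (p + q) = f p + f q"
  shows "\<exists>u. \<forall>p\<in>P. f p = ipair u p"
proof -
  have well_defined: "f p - f q = f p' - f q'"
    if "p \<in> P" "q \<in> P" "p' \<in> P" "q' \<in> P" "p - q = p' - q'" for p q p' q'
  proof -
    have "p + q' = p' + q" using that(5) by (simp add: algebra_simps)
    then have "f (p + q') = f (p' + q)" by simp
    then show ?thesis using add that(1-4) by simp
  qed
  define \<phi> where "\<phi> x = (SOME z. \<exists>p\<in>P. \<exists>q\<in>P. x = p - q \<and> z = f p - f q)" for x
  have \<phi>: "\<phi> (p - q) = f p - f q" if "p \<in> P" "q \<in> P" for p q
    unfolding \<phi>_def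
  proof (rule someI2[of _ "f p - f q"])
    show "\<exists>p'\<in>P. \<exists>q'\<in>P. p - q = p' - q' \<and> f p - f q = f p' - f q'"
      using that by blast
    fix z assume "\<exists>p'\<in>P. \<exists>q'\<in>P. p - q = p' - q' \<and> z = f p' - f q'"
    then show "z = f p - f q" using well_defined that by metis
  qed
  have "\<phi> (x + y) = \<phi> x + \<phi> y" for x y
  proof -
    obtain p q where pq: "p \<in> P" "q \<in> P" "x = p - q" by (rule ex_diff)
    obtain p' q' where pq': "p' \<in> P" "q' \<in> P" "y = p' - q'" by (rule ex_diff)
    have "x + y = (p + p') - (q + q')" using pq pq' by simp
    then have "\<phi> (x + y) = f (p + p') - f (q + q')" using \<phi> add_mem pq pq' by metis
    then show ?thesis using \<phi> add pq pq' by simp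
  qed
  then have "f p = ipair (\<chi> j. \<phi> (axis j 1)) p" if "p \<in> P" for p
    using additive_eq_ipair[of \<phi> p] \<phi>[OF that zero_mem] add[OF zero_mem zero_mem] by simp
  then show ?thesis by blast
qed

lemma mon_hom_ex_linear_coordinates:
  assumes "mon_hom P d f"
  shows "\<exists>U. \<forall>p\<in>P. \<forall>k. int (f p k) = ipair (U k) p"
proof -
  have "\<exists>u. \<forall>p\<in>P. int (f p k) = ipair u p" for k
  proof (rule additive_extends_linear)
    fix p q assume "p \<in> P" "q \<in> P"
    then show "int (f (p + q) k) = int (f p k) + int (f q k)"
      using assms unfolding mon_hom_def by simp
  qed
  then show ?thesis by metis
qed

abbreviation dual :: "(rat^'n) set" where
  "dual \<equiv> dual_cone (cone_of P)"

lemma ratv_mem_cone_of: "p \<in> P \<Longrightarrow> ratv p \<in> cone_of P"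
  unfolding cone_of_def by (intro CollectI exI[of _ "{p}"] exI[of _ "\<lambda>_. 1"]) simp

lemma gen_cone_gens_subset: "gen_cone gens ratv \<subseteq> cone_of P"
  unfolding gen_cone_def cone_of_def using gens(1,2) by blast

lemma dual_qpair_nonneg: "u \<in> dual \<Longrightarrow> p \<in> P \<Longrightarrow> qpair u (ratv p) \<ge> 0"
  using ratv_mem_cone_of unfolding dual_cone_def by blast

lemma mem_dual_iff: "u \<in> dual \<longleftrightarrow> (\<forall>g\<in>gens. qpair u (ratv g) \<ge> 0)"
proof
  assume "u \<in> dual"
  then show "\<forall>g\<in>gens. qpair u (ratv g) \<ge> 0" using dual_qpair_nonneg gens(2) by blast
next
  assume gens_nonneg: "\<forall>g\<in>gens. qpair u (ratv g) \<ge> 0"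
  have P_nonneg: "qpair u (ratv p) \<ge> 0" if "p \<in> P" for p
    by (rule qpair_eq_sum_gens[OF that, of u]) (use gens_nonneg in \<open>auto intro!: sum_nonneg\<close>)
  show "u \<in> dual" unfolding dual_cone_def
  proof (intro CollectI ballI)
    fix x assume "x \<in> cone_of P"
    then obtain S a where S: "finite S" "S \<subseteq> P" "\<forall>s\<in>S. a s \<ge> 0" "x = (\<Sum>s\<in>S. a s *s ratv s)"
      unfolding cone_of_def by blast
    have "qpair u x = (\<Sum>s\<in>S. a s * qpair u (ratv s))" using S by (simp add: qpair_sum_right)
    also have "\<dots> \<ge> 0" using S P_nonneg by (auto intro!: sum_nonneg)
    finally show "qpair u x \<ge> 0" .
  qed
qed

lemma dual_add: "a \<in> dual \<Longrightarrow> b \<in> dual \<Longrightarrow> a + b \<in> dual"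
  and dual_scaleR: "a \<in> dual \<Longrightarrow> c \<ge> 0 \<Longrightarrow> c *s a \<in> dual"
  and zero_mem_dual: "0 \<in> dual"
  unfolding dual_cone_def by auto

lemma dual_pointed:
  assumes "u \<in> dual" "u \<noteq> 0" "s *s u \<in> dual"
  shows "s \<ge> 0"
proof (rule ccontr)
  assume "\<not> s \<ge> 0"
  then have "qpair u (ratv g) = 0" if "g \<in> gens" for g
    using assms that unfolding mem_dual_iff by (force simp: zero_le_mult_iff)
  then show False using qpair_gens_zero_imp_zero assms(2) by blast
qed

end

context lattice_monoid
begin

definition support :: "rat^'n \<Rightarrow> (int^'n) set" where
  "support u = {g\<in>gens. qpair u (ratv g) \<noteq> 0}"

lemma finite_support: "finite (support u)"
  unfolding support_def using gens(1) by simp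

lemma support_empty_iff: "support u = {} \<longleftrightarrow> u = 0"
  using qpair_gens_zero_imp_zero unfolding support_def by auto

lemma support_scaleR: "t \<noteq> 0 \<Longrightarrow> support (t *s u) = support u"
  unfolding support_def by simp

lemma support_pos: "u \<in> dual \<Longrightarrow> g \<in> support u \<Longrightarrow> qpair u (ratv g) > 0"
  unfolding support_def mem_dual_iff by force

lemma extremal_ray_of_dual:
  assumes u: "u \<in> dual" "u \<noteq> 0"
    and rigid: "\<And>w. support w \<subseteq> support u \<Longrightarrow> \<exists>s. w = s *s u"
  shows "extremal_ray dual (ray u)"
proof -
  have "a \<in> ray u \<and> b \<in> ray u" if ab: "a \<in> dual" "b \<in> dual" "a + b \<in> ray u" for a b
  proof -
    obtain t where "a + b = t *s u" using ab(3) by (auto simp: ray_def)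
    then have sum: "qpair a (ratv g) + qpair b (ratv g) = t * qpair u (ratv g)" for g
      by (metis qpair_add_left qpair_scaleR_left)
    have nonneg: "qpair a (ratv g) \<ge> 0" "qpair b (ratv g) \<ge> 0" if "g \<in> gens" for g
      using ab(1,2) that unfolding mem_dual_iff by blast+
    have "qpair u (ratv g) \<noteq> 0" if "g \<in> support a \<union> support b" for g
    proof -
      have "g \<in> gens" "qpair a (ratv g) \<noteq> 0 \<or> qpair b (ratv g) \<noteq> 0"
        using that unfolding support_def by auto
      then have "qpair a (ratv g) + qpair b (ratv g) \<noteq> 0"
        using nonneg by (simp add: add_nonneg_eq_0_iff)
      then show ?thesis using sum by simp
    qed
    then have "support a \<subseteq> support u" "support b \<subseteq> support u"
      unfolding support_def by blast+
    then obtain sa sb where "a = sa *s u" "b = sb *s u"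
      using rigid by blast
    moreover have "sa \<ge> 0" "sb \<ge> 0"
      using dual_pointed u ab calculation by blast+
    ultimately show ?thesis by (simp add: ray_scaleR_mem)
  qed
  moreover have "ray u \<subseteq> dual"
    using u dual_scaleR by (auto simp: ray_def)
  ultimately show ?thesis
    using u(2) unfolding extremal_ray_def ray_def by blast
qed

text \<open>The witness is \<open>r u - w\<close>, with \<open>r\<close> the largest ratio of \<open>w\<close> to \<open>u\<close> on the generators
  in the support of \<open>u\<close>; it vanishes where that ratio is attained.\<close>
lemma dual_ex_smaller_support:
  assumes u: "u \<in> dual" and w: "support w \<subseteq> support u" "\<forall>s. w \<noteq> s *s u"
  shows "\<exists>w'. w' \<in> dual \<and> w' \<noteq> 0 \<and> support w' \<subset> support u"
proof -
  have "u \<noteq> 0"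
    using w support_empty_iff by (metis subset_empty vector_smult_lzero)
  then have "support u \<noteq> {}" using support_empty_iff by simp
  define r where "r g = qpair w (ratv g) / qpair u (ratv g)" for g
  obtain g1 where g1: "g1 \<in> support u" "\<forall>g\<in>support u. r g \<le> r g1"
    using ex_is_arg_min_if_finite[OF finite_support \<open>support u \<noteq> {}\<close>, of "\<lambda>g. - r g"]
    by (auto simp: is_arg_min_linorder)
  define w' where "w' = r g1 *s u - w"
  have w'_on_support: "qpair w' (ratv g) = qpair u (ratv g) * (r g1 - r g)" if "g \<in> support u" for g
    using support_pos[OF u that] unfolding w'_def r_def by (simp add: field_simps)
  have w'_off_support: "qpair w' (ratv g) = 0" if "g \<in> gens" "g \<notin> support u" for g
    using that w(1) unfolding w'_def support_def by auto
  have "w' \<in> dual"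
    unfolding mem_dual_iff
  proof
    fix g assume g: "g \<in> gens"
    show "qpair w' (ratv g) \<ge> 0"
    proof (cases "g \<in> support u")
      case True
      then show ?thesis
        using w'_on_support support_pos[OF u] g1(2) by (simp add: less_imp_le)
    qed (simp add: g w'_off_support)
  qed
  moreover have "w' \<noteq> 0"
    using w(2) unfolding w'_def by (metis eq_iff_diff_eq_0)
  moreover have "support w' \<subseteq> support u - {g1}"
    using w'_on_support[OF g1(1)] w'_off_support unfolding support_def by auto
  ultimately show ?thesis using g1(1) by blast
qed

text \<open>Subtracting the largest multiple of \<open>w\<close> that keeps \<open>u\<close> in the dual cone kills a generator.\<close>
lemma dual_diff_smaller_support:
  assumes u: "u \<in> dual" and w: "w \<in> dual" "w \<noteq> 0" "support w \<subseteq> support u"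
  shows "\<exists>t>0. u - t *s w \<in> dual \<and> support (u - t *s w) \<subset> support u"
proof -
  have "support w \<noteq> {}" using w(2) support_empty_iff by simp
  define \<rho> where "\<rho> g = qpair u (ratv g) / qpair w (ratv g)" for g
  obtain g2 where g2: "g2 \<in> support w" "\<forall>g\<in>support w. \<rho> g2 \<le> \<rho> g"
    using ex_is_arg_min_if_finite[OF finite_support \<open>support w \<noteq> {}\<close>, of \<rho>]
    by (auto simp: is_arg_min_linorder)
  have \<rho>_pos: "\<rho> g > 0" if "g \<in> support w" for g
    using support_pos[OF u] support_pos[OF w(1)] w(3) that unfolding \<rho>_def
    by (meson divide_pos_pos subsetD)
  define t where "t = \<rho> g2"
  have "u - t *s w \<in> dual"
    unfolding mem_dual_iff
  proof
    fix g assume g: "g \<in> gens"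
    show "qpair (u - t *s w) (ratv g) \<ge> 0"
    proof (cases "g \<in> support w")
      case True
      then have "t * qpair w (ratv g) \<le> qpair u (ratv g)"
        using g2(2) support_pos[OF w(1)] unfolding t_def \<rho>_def by (simp add: pos_le_divide_eq)
      then show ?thesis by simp
    next
      case False
      then show ?thesis using g u unfolding support_def mem_dual_iff by simp
    qed
  qed
  moreover have "support (u - t *s w) \<subseteq> support u - {g2}"
  proof
    fix g assume g: "g \<in> support (u - t *s w)"
    then have "g \<in> support u"
      using w(3) unfolding support_def by auto
    moreover have "g \<noteq> g2"
      using g support_pos[OF w(1) g2(1)] unfolding support_def t_def \<rho>_def by auto
    ultimately show "g \<in> support u - {g2}" by blast
  qed
  ultimately show ?thesis using g2(1) w(3) \<rho>_pos unfolding t_def by blast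
qed

end

locale toric_rays = lattice_monoid P for P :: "(int^'n::finite) set" +
  fixes d :: nat and v :: "nat \<Rightarrow> int^'n"
  assumes bij: "bij_betw v {..<d} (ray_generators P)"
begin

lemma ray_generator:
  assumes "l < d"
  shows "extremal_ray dual (ray (ratv (v l)))" "first_lattice_point (ray (ratv (v l))) (v l)"
proof -
  obtain R where R: "extremal_ray dual R" "first_lattice_point R (v l)"
    using bij assms unfolding bij_betw_def ray_generators_def by blast
  obtain u where u: "u \<noteq> 0" "R = ray u"
    using R(1) unfolding extremal_ray_def ray_def by blast
  have "ray u = ray (ratv (v l))"
    by (rule ray_eq_ray) (use u R(2) in \<open>auto simp: first_lattice_point_def\<close>)
  then show "extremal_ray dual (ray (ratv (v l)))" "first_lattice_point (ray (ratv (v l))) (v l)"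
    using R u(2) by auto
qed

lemma v_nonzero: "l < d \<Longrightarrow> v l \<noteq> 0"
  using ray_generator(2) unfolding first_lattice_point_def by blast

lemma v_mem_dual: "l < d \<Longrightarrow> ratv (v l) \<in> dual"
  using ray_generator(1) ray_self unfolding extremal_ray_def by blast

lemma ipair_v_nonneg: "l < d \<Longrightarrow> p \<in> P \<Longrightarrow> ipair (v l) p \<ge> 0"
  using dual_qpair_nonneg[OF v_mem_dual] by (simp add: qpair_ratv)

lemma ray_index_unique:
  assumes "l < d" "l' < d" "y \<noteq> 0" "y \<in> ray (ratv (v l))" "y \<in> ray (ratv (v l'))"
  shows "l = l'"
proof -
  have "ray (ratv (v l)) = ray (ratv (v l'))"
    by (rule ray_inter_eq) (use assms v_nonzero in auto)
  then have "first_lattice_point (ray (ratv (v l))) (v l')"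
    using ray_generator(2)[OF assms(2)] by simp
  then have "v l = v l'"
    using first_lattice_point_unique ray_generator(2)[OF assms(1)] by blast
  then show ?thesis
    using bij assms(1,2) unfolding bij_betw_def inj_on_def by blast
qed

lemma extremal_ray_of_dual_index:
  assumes "extremal_ray dual (ray u)" "u \<noteq> 0"
  shows "\<exists>l<d. \<exists>t>0. u = t *s ratv (v l)"
proof -
  obtain w where w: "first_lattice_point (ray u) w"
    using first_lattice_point_ex[OF assms(2)] by blast
  then have "w \<in> ray_generators P"
    using assms(1) unfolding ray_generators_def by blast
  then obtain l where l: "l < d" "w = v l"
    using bij unfolding bij_betw_def by auto
  obtain s where s: "s \<ge> 0" "ratv w = s *s u"
    using w unfolding first_lattice_point_def ray_def by blast
  have "s \<noteq> 0" using s w unfolding first_lattice_point_def by auto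
  then have "u = (1 / s) *s ratv (v l)" "1 / s > 0"
    using s l by (simp_all add: vector_smult_assoc)
  then show ?thesis using l(1) by blast
qed

text \<open>Induction on the support of \<open>u\<close>: either \<open>u\<close> spans an extremal ray, or it is the sum of two
  elements of the dual cone with smaller support.\<close>
theorem dual_subset_gen_cone: "u \<in> dual \<Longrightarrow> u \<in> gen_cone {..<d} (\<lambda>l. ratv (v l))"
proof (induction "card (support u)" arbitrary: u rule: less_induct)
  case less
  show ?case
  proof (cases "\<exists>w. support w \<subseteq> support u \<and> (\<forall>s. w \<noteq> s *s u)")
    case True
    then obtain w where w: "support w \<subseteq> support u" "\<forall>s. w \<noteq> s *s u" by blast
    obtain w' where w': "w' \<in> dual" "w' \<noteq> 0" "support w' \<subset> support u"
      using dual_ex_smaller_support[OF less.prems w] by blast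
    obtain t where t: "t > 0" "u - t *s w' \<in> dual" "support (u - t *s w') \<subset> support u"
      using dual_diff_smaller_support[OF less.prems w'(1,2) psubset_imp_subset[OF w'(3)]] by blast
    have "support (t *s w') \<subset> support u"
      using w'(3) t(1) by (simp add: support_scaleR)
    then have "t *s w' \<in> gen_cone {..<d} (\<lambda>l. ratv (v l))"
      using less.hyps[OF psubset_card_mono[OF finite_support]] dual_scaleR w'(1) t(1) by simp
    moreover have "u - t *s w' \<in> gen_cone {..<d} (\<lambda>l. ratv (v l))"
      using less.hyps[OF psubset_card_mono[OF finite_support t(3)] t(2)] .
    ultimately have "(u - t *s w') + t *s w' \<in> gen_cone {..<d} (\<lambda>l. ratv (v l))"
      by (rule gen_cone_add[rotated])
    then show ?thesis by simp
  next
    case rigid: False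
    show ?thesis
    proof (cases "u = 0")
      case True
      then show ?thesis
        unfolding gen_cone_def by (intro CollectI exI[of _ "\<lambda>_. 0"]) simp
    next
      case False
      have "extremal_ray dual (ray u)"
        by (rule extremal_ray_of_dual[OF less.prems False]) (use rigid in blast)
      then obtain l t where "l < d" "t > 0" "u = t *s ratv (v l)"
        using extremal_ray_of_dual_index False by blast
      then show ?thesis
        using gen_cone_scaleR[OF gen_cone_generator[of l "{..<d}" "\<lambda>l. ratv (v l)"], of t] by simp
    qed
  qed
qed

lemma v_nonneg_imp_mem_cone_of:
  assumes "\<And>l. l < d \<Longrightarrow> ipair (v l) x \<ge> 0"
  shows "ratv x \<in> cone_of P"
proof -
  have "ratv x \<in> gen_cone gens ratv"
  proof (rule ccontr)
    assume "ratv x \<notin> gen_cone gens ratv"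
    then obtain u where u: "\<forall>g\<in>gens. qpair u (ratv g) \<ge> 0" "qpair u (ratv x) < 0"
      using farkas[OF gens(1)] by blast
    then have "u \<in> gen_cone {..<d} (\<lambda>l. ratv (v l))"
      using dual_subset_gen_cone mem_dual_iff by blast
    then obtain a where a: "\<forall>l<d. a l \<ge> 0" "u = (\<Sum>l<d. a l *s ratv (v l))"
      unfolding gen_cone_def by blast
    then have "qpair u (ratv x) = (\<Sum>l<d. a l * of_int (ipair (v l) x))"
      by (simp add: qpair_sum_left qpair_ratv)
    also have "\<dots> \<ge> 0"
      using a(1) assms by (auto intro!: sum_nonneg)
    finally show False using u(2) by simp
  qed
  then show ?thesis using gen_cone_gens_subset by blast
qed

definition ray_embedding :: "int^'n \<Rightarrow> nat \<Rightarrow> nat" where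
  "ray_embedding p k = (if k < d then nat (ipair (v k) p) else 0)"

lemma mon_hom_ray_embedding: "mon_hom P d ray_embedding"
  unfolding mon_hom_def
proof (intro conjI ballI)
  fix p q assume "p \<in> P" "q \<in> P"
  then show "ray_embedding (p + q) = (\<lambda>k. ray_embedding p k + ray_embedding q k)"
    using ipair_v_nonneg by (auto simp: ray_embedding_def nat_add_distrib)
qed (auto simp: nvec_def ray_embedding_def fun_eq_iff)

lemma exact_hom_ray_embedding:
  assumes "saturated P"
  shows "exact_hom P ray_embedding"
  unfolding exact_hom_def
proof (intro ballI impI)
  fix p q assume p: "p \<in> P" and q: "q \<in> P" and le: "\<forall>k. ray_embedding q k \<le> ray_embedding p k"
  have "ipair (v l) (p - q) \<ge> 0" if "l < d" for l
    using le[rule_format, of l] that ipair_v_nonneg[OF that p] ipair_v_nonneg[OF that q]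
    by (simp add: ray_embedding_def)
  then show "p - q \<in> P"
    using saturated_cone_of_lattice_point[OF submonoid assms] v_nonneg_imp_mem_cone_of by blast
qed

end

definition nvec_unit :: "nat \<Rightarrow> nat \<Rightarrow> nat" where
  "nvec_unit l = (\<lambda>k. if k = l then 1 else 0)"

definition reindex_scale :: "nat \<Rightarrow> (nat \<Rightarrow> nat) \<Rightarrow> (nat \<Rightarrow> nat) \<Rightarrow> (nat \<Rightarrow> nat) \<Rightarrow> nat \<Rightarrow> nat" where
  "reindex_scale d m \<tau> x k = (if k < d then m k * x (\<tau> k) else 0)"

lemma free_hom_reindex_scale: "free_hom d d (reindex_scale d m \<tau>)"
  unfolding free_hom_def reindex_scale_def by (auto simp: nvec_def algebra_simps)

lemma free_hom_sum:
  assumes j: "free_hom d e j" and f: "\<And>i. i \<in> S \<Longrightarrow> f i \<in> nvec d"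
  shows "j (\<lambda>k. \<Sum>i\<in>S. f i k) = (\<lambda>k. \<Sum>i\<in>S. j (f i) k)"
  using f
proof (induct S rule: infinite_finite_induct)
  case (insert i S)
  have "(\<lambda>k. \<Sum>i\<in>S. f i k) \<in> nvec d"
    using insert.prems by (simp add: nvec_def)
  then show ?case
    using j insert unfolding free_hom_def by simp
qed (use j in \<open>simp_all add: free_hom_def\<close>)

lemma free_hom_nat_mult:
  assumes j: "free_hom d e j" and y: "y \<in> nvec d"
  shows "j (\<lambda>k. m * y k) = (\<lambda>k. m * j y k)"
  using free_hom_sum[OF j, of "{..<m}" "\<lambda>_. y"] y by simp

lemma free_hom_expand:
  assumes j: "free_hom d e j" and x: "x \<in> nvec d"
  shows "j x k = (\<Sum>l<d. x l * j (nvec_unit l) k)"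
proof -
  have "(\<Sum>l<d. x l * nvec_unit l k) = (\<Sum>l<d. if l = k then x k else 0)" for k
    by (rule sum.cong) (auto simp: nvec_unit_def)
  then have "x = (\<lambda>k. \<Sum>l<d. x l * nvec_unit l k)"
    using x by (auto simp: fun_eq_iff nvec_def)
  moreover have "(\<lambda>k. x l * nvec_unit l k) \<in> nvec d" if "l < d" for l
    using that by (simp add: nvec_def nvec_unit_def)
  ultimately have "j x = (\<lambda>k. \<Sum>l<d. j (\<lambda>k. x l * nvec_unit l k) k)"
    using free_hom_sum[OF j, of "{..<d}" "\<lambda>l k. x l * nvec_unit l k"] by simp
  also have "\<dots> = (\<lambda>k. \<Sum>l<d. x l * j (nvec_unit l) k)"
    using free_hom_nat_mult[OF j] by (simp add: nvec_def nvec_unit_def)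
  finally show ?thesis by simp
qed

context toric_rays
begin

lemma nonneg_combination_on_ray:
  assumes t: "t < d" and a: "\<And>l. l < d \<Longrightarrow> a l \<ge> 0"
    and on_ray: "(\<Sum>l<d. a l *s ratv (v l)) \<in> ray (ratv (v t))"
    and l: "l < d" "l \<noteq> t"
  shows "a l = 0"
proof (rule ccontr)
  assume "a l \<noteq> 0"
  have "a l *s ratv (v l) \<in> ray (ratv (v t))"
    by (rule extremal_ray_sum_mem[OF ray_generator(1)[OF t] zero_mem_dual dual_add finite_lessThan])
      (use l a v_mem_dual dual_scaleR on_ray in auto)
  moreover have "a l > 0"
    using a[OF l(1)] \<open>a l \<noteq> 0\<close> by simp
  ultimately have "ratv (v l) \<in> ray (ratv (v t))"
    using ray_scaleR_pos_mem by blast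
  then show False
    using ray_index_unique[OF l(1) t _ ray_self] v_nonzero[OF l(1)] l(2) by simp
qed

end

locale exact_embedding = toric_rays P d v for P :: "(int^'n::finite) set" and d v +
  fixes f :: "int^'n \<Rightarrow> nat \<Rightarrow> nat" and U :: "nat \<Rightarrow> int^'n"
  assumes f_hom: "mon_hom P d f" and f_exact: "exact_hom P f"
    and f_eq_ipair: "\<And>p k. p \<in> P \<Longrightarrow> int (f p k) = ipair (U k) p"
begin

lemma U_mem_dual: "ratv (U k) \<in> dual"
  unfolding mem_dual_iff
proof
  fix g assume "g \<in> gens"
  then have "ipair (U k) g = int (f g k)"
    using gens(2) f_eq_ipair by auto
  then have "qpair (ratv (U k)) (ratv g) = of_nat (f g k)"
    by (simp add: qpair_ratv)
  then show "qpair (ratv (U k)) (ratv g) \<ge> 0" by simp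
qed

lemma U_nonneg_imp_mem:
  assumes "\<And>k. k < d \<Longrightarrow> ipair (U k) x \<ge> 0"
  shows "x \<in> P"
proof -
  obtain p q where pq: "p \<in> P" "q \<in> P" "x = p - q" by (rule ex_diff)
  have "f q k \<le> f p k" for k
  proof (cases "k < d")
    case True
    have "int (f p k) - int (f q k) = ipair (U k) x"
      using f_eq_ipair pq by simp
    then show ?thesis using assms[OF True] by simp
  next
    case False
    then show ?thesis using f_hom pq unfolding mon_hom_def nvec_def by simp
  qed
  then show ?thesis using f_exact pq unfolding exact_hom_def by blast
qed

text \<open>Otherwise Farkas yields a lattice point outside P on which all coordinates of \<open>f\<close> are
  nonnegative, contradicting exactness.\<close>
lemma v_mem_gen_cone_coordinates:
  assumes l: "l < d"
  shows "ratv (v l) \<in> gen_cone {..<d} (\<lambda>k. ratv (U k))"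
proof (rule ccontr)
  assume "ratv (v l) \<notin> gen_cone {..<d} (\<lambda>k. ratv (U k))"
  then obtain y where y: "\<forall>k\<in>{..<d}. qpair y (ratv (U k)) \<ge> 0" "qpair y (ratv (v l)) < 0"
    using farkas[OF finite_lessThan] by blast
  obtain N z where Nz: "N > (0::int)" "ratv z = of_int N *s y"
    using ex_int_multiple_ratv[of y] by blast
  have "ipair (U k) z \<ge> 0" if "k < d" for k
  proof -
    have "of_int (ipair (U k) z) = of_int N * qpair y (ratv (U k))"
      using Nz(2) by (simp flip: qpair_ratv add: qpair_commute)
    also have "\<dots> \<ge> 0" using y(1) Nz(1) that by simp
    finally show ?thesis by simp
  qed
  then have "z \<in> P" by (rule U_nonneg_imp_mem)
  then have "qpair (ratv (v l)) (ratv z) \<ge> 0"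
    using dual_qpair_nonneg v_mem_dual[OF l] by blast
  moreover have "qpair (ratv (v l)) (ratv z) < 0"
    using Nz y(2) by (simp add: qpair_commute mult_pos_neg)
  ultimately show False by simp
qed

lemma ray_meets_coordinate:
  assumes l: "l < d"
  shows "\<exists>k<d. U k \<noteq> 0 \<and> ratv (U k) \<in> ray (ratv (v l))"
proof -
  obtain a where a: "\<forall>k\<in>{..<d}. a k \<ge> 0" "ratv (v l) = (\<Sum>k<d. a k *s ratv (U k))"
    using v_mem_gen_cone_coordinates[OF l] unfolding gen_cone_def by blast
  have "\<exists>k<d. a k *s ratv (U k) \<noteq> 0"
  proof (rule ccontr)
    assume "\<not> ?thesis"
    then have "ratv (v l) = 0" using a(2) by (simp add: sum.neutral)
    then show False using v_nonzero[OF l] by simp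
  qed
  then obtain k where k: "k < d" "a k *s ratv (U k) \<noteq> 0" by blast
  have "a k *s ratv (U k) \<in> ray (ratv (v l))"
    by (rule extremal_ray_sum_mem[OF ray_generator(1)[OF l] zero_mem_dual dual_add finite_lessThan])
      (use k a U_mem_dual dual_scaleR ray_self in auto)
  moreover have "a k \<noteq> 0" using k(2) by auto
  then have "a k > 0" using a(1) k(1) by (simp add: less_le)
  ultimately have "ratv (U k) \<in> ray (ratv (v l))"
    using ray_scaleR_pos_mem by blast
  moreover have "U k \<noteq> 0" using k(2) by auto
  ultimately show ?thesis using k(1) by blast
qed

lemma ex_ray_assignment:
  obtains \<tau> where "\<And>k. k < d \<Longrightarrow> \<tau> k < d \<and> ratv (U k) \<in> ray (ratv (v (\<tau> k)))"
proof -
  define \<sigma> where "\<sigma> l = (SOME k. k < d \<and> U k \<noteq> 0 \<and> ratv (U k) \<in> ray (ratv (v l)))" for l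
  have \<sigma>: "\<sigma> l < d \<and> U (\<sigma> l) \<noteq> 0 \<and> ratv (U (\<sigma> l)) \<in> ray (ratv (v l))" if "l < d" for l
    unfolding \<sigma>_def by (rule someI_ex) (use ray_meets_coordinate[OF that] in blast)
  have "inj_on \<sigma> {..<d}"
  proof
    fix l l' assume "l \<in> {..<d}" "l' \<in> {..<d}" "\<sigma> l = \<sigma> l'"
    then show "l = l'"
      using ray_index_unique[of l l' "ratv (U (\<sigma> l))"] \<sigma>[of l] \<sigma>[of l'] by auto
  qed
  then have "\<sigma> ` {..<d} = {..<d}"
    using \<sigma> by (intro endo_inj_surj) auto
  then have "\<exists>l. k < d \<longrightarrow> l < d \<and> ratv (U k) \<in> ray (ratv (v l))" for k
    using \<sigma> by (metis imageE lessThan_iff)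
  then obtain \<tau> where "\<And>k. k < d \<longrightarrow> \<tau> k < d \<and> ratv (U k) \<in> ray (ratv (v (\<tau> k)))"
    using choice[of "\<lambda>k l. k < d \<longrightarrow> l < d \<and> ratv (U k) \<in> ray (ratv (v l))"] by blast
  then show thesis using that by blast
qed

lemma ex_multiplicities:
  obtains \<tau> m where "\<And>k. k < d \<Longrightarrow> \<tau> k < d \<and> U k = int (m k) *s v (\<tau> k)"
proof -
  obtain \<tau> where \<tau>: "\<And>k. k < d \<Longrightarrow> \<tau> k < d \<and> ratv (U k) \<in> ray (ratv (v (\<tau> k)))"
    using ex_ray_assignment by blast
  define m where "m k = (SOME m. U k = int m *s v (\<tau> k))" for k
  have "U k = int (m k) *s v (\<tau> k)" if "k < d" for k
    unfolding m_def
    by (rule someI_ex) (use first_lattice_point_multiple[OF ray_generator(2)] \<tau>[OF that] in blast)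
  then show thesis using that \<tau> by blast
qed

lemma coordinate_coefficients:
  assumes j: "free_hom d d j" and factor: "\<forall>p\<in>P. f p = j (ray_embedding p)"
    and k: "k < d" and t: "t < d" and U_k: "U k = int m *s v t" and l: "l < d"
  shows "j (nvec_unit l) k = (if l = t then m else 0)"
proof -
  define c where "c l' = j (nvec_unit l') k" for l'
  have "ipair (U k - (\<Sum>l'<d. int (c l') *s v l')) p = 0" if p: "p \<in> P" for p
  proof -
    have "ray_embedding p \<in> nvec d"
      using mon_hom_ray_embedding p unfolding mon_hom_def by blast
    then have "int (f p k) = (\<Sum>l'<d. int (ray_embedding p l') * int (c l'))"
      using factor p free_hom_expand[OF j] unfolding c_def by simp
    also have "\<dots> = (\<Sum>l'<d. int (c l') * ipair (v l') p)"
      using ipair_v_nonneg p by (auto simp: ray_embedding_def intro!: sum.cong)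
    finally show ?thesis
      using f_eq_ipair[OF p, of k] by (simp add: ipair_sum_left)
  qed
  then have "U k - (\<Sum>l'<d. int (c l') *s v l') = 0"
    by (rule ipair_zero_on_P_imp_zero)
  then have "ratv (int m *s v t) = ratv (\<Sum>l'<d. int (c l') *s v l')"
    using U_k by simp
  then have sum: "of_nat m *s ratv (v t) = (\<Sum>l'<d. of_nat (c l') *s ratv (v l'))"
    by (simp add: ratv_sum)
  have "(\<Sum>l'<d. of_nat (c l') *s ratv (v l')) \<in> ray (ratv (v t))"
    unfolding sum[symmetric] by (simp add: ray_scaleR_mem)
  then have c0: "c l' = 0" if "l' < d" "l' \<noteq> t" for l'
    using nonneg_combination_on_ray[OF t, of "\<lambda>l'. of_nat (c l')" l'] that by simp
  have "(\<Sum>l'<d. of_nat (c l') *s ratv (v l')) = of_nat (c t) *s ratv (v t)"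
    using t c0 by (subst sum.remove[of _ t]) (auto intro!: sum.neutral)
  then have "of_nat (c t) = (of_nat m :: rat)"
    using sum scaleR_right_cancel_rat v_nonzero[OF t] by simp
  then have "c t = m" by simp
  then show ?thesis
    using c0 l unfolding c_def by auto
qed

lemma factors_through_reindex_scale:
  assumes \<tau>m: "\<And>k. k < d \<Longrightarrow> \<tau> k < d \<and> U k = int (m k) *s v (\<tau> k)" and p: "p \<in> P"
  shows "f p = reindex_scale d m \<tau> (ray_embedding p)"
proof
  fix k
  show "f p k = reindex_scale d m \<tau> (ray_embedding p) k"
  proof (cases "k < d")
    case True
    have "ipair (v (\<tau> k)) p \<ge> 0"
      using ipair_v_nonneg \<tau>m[OF True] p by blast
    then have "int (f p k) = int (m k * nat (ipair (v (\<tau> k)) p))"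
      using f_eq_ipair[OF p, of k] \<tau>m[OF True] by simp
    then have "f p k = m k * nat (ipair (v (\<tau> k)) p)"
      by (simp only: of_nat_eq_iff)
    then show ?thesis
      using True \<tau>m[OF True] by (simp add: reindex_scale_def ray_embedding_def)
  next
    case False
    then show ?thesis using f_hom p unfolding mon_hom_def nvec_def reindex_scale_def by simp
  qed
qed

lemma factorization_unique:
  assumes j: "free_hom d d j" "\<forall>p\<in>P. f p = j (ray_embedding p)"
    and j': "free_hom d d j'" "\<forall>p\<in>P. f p = j' (ray_embedding p)"
    and x: "x \<in> nvec d"
  shows "j' x = j x"
proof -
  obtain \<tau> m where \<tau>m: "\<And>k. k < d \<Longrightarrow> \<tau> k < d \<and> U k = int (m k) *s v (\<tau> k)"
    using ex_multiplicities by blast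
  have "j' (nvec_unit l) k = j (nvec_unit l) k" if "l < d" for l k
  proof (cases "k < d")
    case True
    then have "\<tau> k < d" "U k = int (m k) *s v (\<tau> k)"
      using \<tau>m by blast+
    then show ?thesis
      using coordinate_coefficients[OF j True] coordinate_coefficients[OF j' True] that by simp
  next
    case False
    then show ?thesis
      using j(1) j'(1) that unfolding free_hom_def nvec_def nvec_unit_def by auto
  qed
  then show ?thesis
    using free_hom_expand[OF j'(1) x] free_hom_expand[OF j(1) x] by (auto simp: fun_eq_iff)
qed

theorem factors_uniquely:
  "\<exists>j. free_hom d d j \<and> (\<forall>p\<in>P. f p = j (ray_embedding p)) \<and>
     (\<forall>j'. free_hom d d j' \<and> (\<forall>p\<in>P. f p = j' (ray_embedding p)) \<longrightarrow> (\<forall>x\<in>nvec d. j' x = j x))"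
proof -
  obtain \<tau> m where \<tau>m: "\<And>k. k < d \<Longrightarrow> \<tau> k < d \<and> U k = int (m k) *s v (\<tau> k)"
    using ex_multiplicities by blast
  then have "free_hom d d (reindex_scale d m \<tau>)" "\<forall>p\<in>P. f p = reindex_scale d m \<tau> (ray_embedding p)"
    using free_hom_reindex_scale factors_through_reindex_scale by blast+
  then show ?thesis
    using factorization_unique by blast
qed

end

theorem proposition2p2:
  fixes P :: "(int^'n::finite) set" and d :: nat and v :: "nat \<Rightarrow> int^'n"
    and i :: "int^'n \<Rightarrow> nat \<Rightarrow> nat"
  assumes "sat_toric_sharp P"
    and "bij_betw v {..<d} (ray_generators P)"
    and "\<And>p k. i p k = (if k < d then nat (ipair (v k) p) else 0)"
  shows "mon_hom P d i \<and> exact_hom P i \<and>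
    (\<forall>i'. mon_hom P d i' \<and> exact_hom P i' \<longrightarrow>
       (\<exists>j. free_hom d d j \<and> (\<forall>p\<in>P. i' p = j (i p)) \<and>
          (\<forall>j'. free_hom d d j' \<and> (\<forall>p\<in>P. i' p = j' (i p)) \<longrightarrow> (\<forall>x\<in>nvec d. j' x = j x))))"
proof -
  have "lattice_monoid P" and saturated: "saturated P"
    using assms(1) unfolding sat_toric_sharp_def lattice_monoid_def by blast+
  then interpret toric_rays P d v
    using assms(2) by (intro toric_rays.intro toric_rays_axioms.intro)
  have i: "i = ray_embedding"
    using assms(3) by (intro ext) (simp add: ray_embedding_def)
  have "\<exists>j. free_hom d d j \<and> (\<forall>p\<in>P. i' p = j (ray_embedding p)) \<and>
      (\<forall>j'. free_hom d d j' \<and> (\<forall>p\<in>P. i' p = j' (ray_embedding p)) \<longrightarrow> (\<forall>x\<in>nvec d. j' x = j x))"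
    if i': "mon_hom P d i'" "exact_hom P i'" for i'
  proof -
    obtain U where "\<forall>p\<in>P. \<forall>k. int (i' p k) = ipair (U k) p"
      using mon_hom_ex_linear_coordinates[OF i'(1)] by blast
    then interpret exact_embedding P d v i' U
      using i' by unfold_locales auto
    show ?thesis by (rule factors_uniquely)
  qed
  then show ?thesis
    unfolding i using mon_hom_ray_embedding exact_hom_ray_embedding[OF saturated] by blast
qed

end
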